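(* Let $\mu>0$ and $0<\beta<1$. Let $g:\mathbb{C}\to\mathbb{R}$ be given by $g(x)=\frac{\mu+|x|^2}{2}$ for $|x|\ge\sqrt{\mu}$ and $g(x)=\sqrt{\mu}|x|$ for $|x|\le\sqrt{\mu}$. Suppose $z_0\in\partial g(x_0)$ and $|z_0|<\beta^2\sqrt{\mu}$. Then for all $x_1\in\mathbb{C}$ with $x_1\neq x_0$ and all $z_1\in\partial g(x_1)$, $$\mathrm{Re}\big((z_1-z_0)\overline{(x_1-x_0)}\big)>(1-\beta^2)|x_1-x_0|^2.$$
   Context: $\partial g$ is the convex subdifferential (with $\mathbb{C}$ regarded as $\mathbb{R}^2$ with inner product $\mathrm{Re}(z\bar w)$); explicitly $\partial g(x)=\{x\}$ if $|x|\ge\sqrt\mu$, $\partial g(x)=\{\sqrt{\mu}\,x/|x|\}$ if $0<|x|\le\sqrt\mu$, and $\partial g(0)=\sqrt{\mu}\,\mathbb{D}$, where $\mathbb{D}$ is the closed unit disc. (In the paper $\beta$ is the constant $\beta_N=\inf\{\|Ax\|_2/\|x\|_2:x\ne0,\mathrm{card}(x)\le N\}$ of a matrix $A$, assumed to satisfy $0<\beta_N<1$; only its value matters here.) *)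

theory Defs
  imports "HOL-Analysis.Analysis"
begin

definition gfun :: "real \<Rightarrow> complex \<Rightarrow> real" where
  "gfun \<mu> x = (if cmod x \<ge> sqrt \<mu> then (\<mu> + (cmod x)^2) / 2 else sqrt \<mu> * cmod x)"

text \<open>Convex subdifferential of f : C \<rightarrow> R, with C regarded as R^2 with
  inner product Re(z * cnj w).\<close>
definition subdiff :: "(complex \<Rightarrow> real) \<Rightarrow> complex \<Rightarrow> complex set" where
  "subdiff f x = {z. \<forall>y. f y \<ge> f x + Re (z * cnj (y - x))}"

end

theory Submission
  imports Defs
begin

text \<open>Testing the subgradient inequality at y = 0 gives Re(z conj x) \<ge> g(x) \<ge> sqrt \<mu> |x|; on
  |x| > sqrt \<mu>, where g is the smooth function (\<mu> + |x|^2)/2, testing it along the ray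
  y = (1 - t) x with t \<rightarrow> 0 gives Re(z conj x) \<ge> |x|^2. Hence every subgradient z at x
  satisfies Re(z conj x) \<ge> max(sqrt \<mu>, |x|) |x|. A subgradient of modulus below sqrt \<mu>
  therefore forces x0 = 0, and for x1 \<noteq> 0, with r = |x1|, the claim reduces to the elementary
  max(sqrt \<mu>, r) r - \<beta>^2 sqrt \<mu> r \<ge> (1 - \<beta>^2) r^2, strictness coming from |z0| < \<beta>^2 sqrt \<mu>.\<close>

lemma Re_mult_cnj_le_cmod: "Re (z * cnj w) \<le> cmod z * cmod w"
  by (metis complex_Re_le_cmod complex_mod_cnj norm_mult)

lemma subdiff_Re_ge:
  assumes "z \<in> subdiff f x"
  shows "f x - f y \<le> Re (z * cnj (x - y))"
proof -
  have "f x + Re (z * cnj (y - x)) \<le> f y"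
    using assms unfolding subdiff_def by blast
  moreover have "Re (z * cnj (y - x)) = - Re (z * cnj (x - y))"
    by (simp add: algebra_simps)
  ultimately show ?thesis by linarith
qed

lemma gfun_zero: "\<mu> \<ge> 0 \<Longrightarrow> gfun \<mu> 0 = 0"
  by (simp add: gfun_def)

lemma gfun_outer: "sqrt \<mu> \<le> cmod x \<Longrightarrow> gfun \<mu> x = (\<mu> + (cmod x)\<^sup>2) / 2"
  by (simp add: gfun_def)

lemma gfun_ge_sqrt_mult_cmod:
  assumes "\<mu> \<ge> 0"
  shows "sqrt \<mu> * cmod x \<le> gfun \<mu> x"
proof (cases "sqrt \<mu> \<le> cmod x")
  case True
  have "0 \<le> (sqrt \<mu> - cmod x)\<^sup>2" by simp
  then have "2 * (sqrt \<mu> * cmod x) \<le> \<mu> + (cmod x)\<^sup>2"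
    using assms by (simp add: power2_diff)
  then show ?thesis using True by (simp add: gfun_outer)
qed (simp add: gfun_def)

lemma subdiff_gfun_Re_ge_sqrt:
  assumes "\<mu> \<ge> 0" "z \<in> subdiff (gfun \<mu>) x"
  shows "sqrt \<mu> * cmod x \<le> Re (z * cnj x)"
  using subdiff_Re_ge[OF assms(2), of 0] gfun_zero[OF assms(1)]
    gfun_ge_sqrt_mult_cmod[OF assms(1), of x]
  by simp

lemma subdiff_gfun_Re_ge_outer:
  assumes "\<mu> \<ge> 0" "z \<in> subdiff (gfun \<mu>) x" "sqrt \<mu> < cmod x"
  shows "(cmod x)\<^sup>2 \<le> Re (z * cnj x)"
proof -
  define s r R where "s = sqrt \<mu>" and "r = cmod x" and "R = Re (z * cnj x)"
  have "0 \<le> s" "s < r"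
    using assms(1,3) by (simp_all add: s_def r_def)
  then have "0 < r" by linarith
  have ray: "r\<^sup>2 - r\<^sup>2 * t / 2 \<le> R" if "0 < t" "t * r \<le> r - s" for t
  proof -
    define y where "y = of_real (1 - t) * x"
    have "t * r \<le> 1 * r"
      using that(2) \<open>0 \<le> s\<close> by simp
    then have "t \<le> 1"
      using \<open>0 < r\<close> by (rule mult_right_le_imp_le)
    then have y_norm: "cmod y = (1 - t) * r"
      unfolding y_def r_def norm_mult norm_of_real by simp
    then have "s \<le> cmod y"
      using that(2) by (simp add: algebra_simps)
    have "gfun \<mu> y = (\<mu> + ((1 - t) * r)\<^sup>2) / 2"
      using gfun_outer[of \<mu> y] \<open>s \<le> cmod y\<close> y_norm by (simp add: s_def)
    moreover have "gfun \<mu> x = (\<mu> + r\<^sup>2) / 2"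
      using gfun_outer[of \<mu> x] \<open>s < r\<close> by (simp add: s_def r_def)
    ultimately have "gfun \<mu> x - gfun \<mu> y = t * (r\<^sup>2 - r\<^sup>2 * t / 2)"
      by (simp add: power2_eq_square field_simps)
    then have "t * (r\<^sup>2 - r\<^sup>2 * t / 2) \<le> Re (z * cnj (x - y))"
      using subdiff_Re_ge[OF assms(2), of y] by simp
    also have "Re (z * cnj (x - y)) = t * R"
      by (simp add: y_def R_def algebra_simps)
    finally show ?thesis
      using \<open>0 < t\<close> by simp
  qed
  have "r\<^sup>2 \<le> R"
  proof (rule field_le_epsilon)
    fix e :: real
    assume "0 < e"
    define t where "t = min ((r - s) / r) (2 * e / r\<^sup>2)"
    have "0 < t"
      using \<open>0 < e\<close> \<open>0 < r\<close> \<open>s < r\<close> by (simp add: t_def)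
    moreover have "t * r \<le> r - s"
      using \<open>0 < r\<close> pos_le_divide_eq[of r t "r - s"] by (simp add: t_def)
    moreover have "r\<^sup>2 * t / 2 \<le> e"
      using \<open>0 < r\<close> pos_le_divide_eq[of "r\<^sup>2" t "2 * e"] by (simp add: t_def mult.commute)
    ultimately show "r\<^sup>2 \<le> R + e"
      using ray[of t] by linarith
  qed
  then show ?thesis
    by (simp add: r_def R_def)
qed

lemma subdiff_gfun_Re_ge_max:
  assumes "\<mu> \<ge> 0" "z \<in> subdiff (gfun \<mu>) x"
  shows "max (sqrt \<mu>) (cmod x) * cmod x \<le> Re (z * cnj x)"
  using subdiff_gfun_Re_ge_sqrt[OF assms] subdiff_gfun_Re_ge_outer[OF assms]
  by (cases "sqrt \<mu> < cmod x") (simp_all add: max_def power2_eq_square)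

lemma subdiff_gfun_small_subgradient:
  assumes "\<mu> \<ge> 0" "z \<in> subdiff (gfun \<mu>) x" "cmod z < sqrt \<mu>"
  shows "x = 0"
proof (rule ccontr)
  assume "x \<noteq> 0"
  then have "cmod z * cmod x < sqrt \<mu> * cmod x"
    using assms(3) by simp
  also have "\<dots> \<le> Re (z * cnj x)"
    using subdiff_gfun_Re_ge_sqrt[OF assms(1,2)] .
  finally show False
    using Re_mult_cnj_le_cmod[of z x] by linarith
qed

lemma sq_weighted_le_max_mult:
  fixes b r s :: real
  assumes "0 \<le> r" "0 \<le> b" "b \<le> 1"
  shows "(1 - b) * r\<^sup>2 \<le> max s r * r - b * s * r"
proof (cases "s \<le> r")
  case True
  have "0 \<le> b * r * (r - s)"
    using True assms by simp
  then show ?thesis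
    using True by (simp add: max_def power2_eq_square algebra_simps)
next
  case False
  have "0 \<le> (1 - b) * r * (s - r)"
    using False assms by simp
  then show ?thesis
    using False by (simp add: max_def power2_eq_square algebra_simps)
qed

theorem lemma4p4:
  fixes \<mu> \<beta> :: real and x0 z0 :: complex
  assumes "\<mu> > 0" and "0 < \<beta>" and "\<beta> < 1"
    and "z0 \<in> subdiff (gfun \<mu>) x0"
    and "cmod z0 < \<beta>^2 * sqrt \<mu>"
  shows "\<forall>x1 z1. x1 \<noteq> x0 \<longrightarrow> z1 \<in> subdiff (gfun \<mu>) x1 \<longrightarrow>
           Re ((z1 - z0) * cnj (x1 - x0)) > (1 - \<beta>^2) * (cmod (x1 - x0))^2"
proof (intro allI impI)
  fix x1 z1
  assume x1: "x1 \<noteq> x0" and z1: "z1 \<in> subdiff (gfun \<mu>) x1"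
  define s r where "s = sqrt \<mu>" and "r = cmod x1"
  have \<beta>2: "0 < \<beta>\<^sup>2" "\<beta>\<^sup>2 < 1"
    using assms(2,3) by (simp_all add: power_less_one_iff)
  have "\<beta>\<^sup>2 * s < s"
    using \<beta>2 assms(1) unfolding s_def by simp
  then have "cmod z0 < s"
    using assms(5) unfolding s_def by linarith
  then have "x0 = 0"
    using subdiff_gfun_small_subgradient[OF _ assms(4)] assms(1) unfolding s_def by simp
  have "r > 0"
    using x1 \<open>x0 = 0\<close> unfolding r_def by simp
  have "(1 - \<beta>\<^sup>2) * r\<^sup>2 \<le> max s r * r - \<beta>\<^sup>2 * s * r"
    using \<open>r > 0\<close> \<beta>2 by (intro sq_weighted_le_max_mult) auto
  also have "\<dots> < max s r * r - cmod z0 * r"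
    using assms(5) \<open>r > 0\<close> unfolding s_def by simp
  also have "\<dots> \<le> Re (z1 * cnj x1) - Re (z0 * cnj x1)"
    using subdiff_gfun_Re_ge_max[OF _ z1] Re_mult_cnj_le_cmod[of z0 x1] assms(1)
    unfolding s_def r_def by fastforce
  also have "\<dots> = Re ((z1 - z0) * cnj x1)"
    by (simp add: algebra_simps)
  finally show "Re ((z1 - z0) * cnj (x1 - x0)) > (1 - \<beta>\<^sup>2) * (cmod (x1 - x0))\<^sup>2"
    using \<open>x0 = 0\<close> unfolding r_def by simp
qed

end
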